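(* Consider the rested multiarmed bandit model with $K$ arms and $M$ plays per slot described in the context, and assume all arms are finite-state, irreducible, aperiodic, rested Markov chains. Then under UCB-M (with any exploration constant $L>0$) there is a constant $C_{\mathbf{S,P,r}}$ depending on the state spaces, rewards and transition probabilities of the arms but not on time, such that for all $n$ $$\Big|R(n)-\Big(n\sum_{j=1}^M \mu^{j}- \sum_{i=1}^K \mu^i E[T^i(n)]\Big)\Big| \leq C_{\mathbf{S,P,r}}.$$
   Context: Model: There are $K$ arms indexed by $i\in\{1,\dots,K\}$. Arm $i$ is a discrete-time Markov chain on a finite state space $S^i$ with transition matrix $P^i$ and stationary distribution $\pi^i=(\pi^i_x)$; each state $x\in S^i$ carries a reward $r^i_x$. The arms are mutually independent. Time is slotted; in each slot $t$ the player selects a set $A(t)$ of exactly $M$ arms ($1\le M\le K$), observes their states and collects the sum of their rewards. In the rested model, an arm's state makes one transition according to $P^i$ each time it is played and stays frozen otherwise. The mean reward of arm $i$ is $\mu^i=\sum_{x}r^i_x\pi^i_x$, with arms indexed so that $\mu^1\ge\dots\ge\mu^M>\mu^{M+1}\ge\dots\ge\mu^K$. The regret up to time $n$ is $R(n)=n\sum_{j=1}^M\mu^j-E\big[\sum_{t=1}^n\sum_{i\in A(t)} r^i_{x^i(t)}\big]$, where $x^i(t)$ is the observed state of arm $i$ in slot $t$. $T^i(n)$ denotes the total number of slots up to the end of slot $n$ in which arm $i$ is played. UCB-M with exploration constant $L>0$: in the first $K$ slots every arm is played exactly $M$ times ($M$ distinct arms per slot). For $t\ge K$, with $\bar r^i(T^i(t))$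 the sample mean of rewards from the $T^i(t)$ plays of arm $i$, compute $g^i_{t,T^i(t)}=\bar r^i(T^i(t))+\sqrt{L\ln t/T^i(t)}$ and in slot $t+1$ play the $M$ arms with the highest indices. *)

theory Defs
  imports "HOL-Probability.Probability"
begin

(* Arms are indexed 1..K, slots 1..n.  States of all arms live in a common type 's;
   arm i has finite state set S i, transition matrix P i, rewards r i. *)

primrec Pn :: "('s set) \<Rightarrow> ('s \<Rightarrow> 's \<Rightarrow> real) \<Rightarrow> nat \<Rightarrow> 's \<Rightarrow> 's \<Rightarrow> real" where
  "Pn S P 0 x y = (if x = y then 1 else 0)"
| "Pn S P (Suc n) x y = (\<Sum>z\<in>S. P x z * Pn S P n z y)"

definition stochastic :: "'s set \<Rightarrow> ('s \<Rightarrow> 's \<Rightarrow> real) \<Rightarrow> bool" where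
  "stochastic S P \<longleftrightarrow> (\<forall>x\<in>S. (\<forall>y\<in>S. P x y \<ge> 0) \<and> (\<Sum>y\<in>S. P x y) = 1)"

definition irreducible :: "'s set \<Rightarrow> ('s \<Rightarrow> 's \<Rightarrow> real) \<Rightarrow> bool" where
  "irreducible S P \<longleftrightarrow> (\<forall>x\<in>S. \<forall>y\<in>S. \<exists>n. Pn S P n x y > 0)"

definition aperiodic :: "'s set \<Rightarrow> ('s \<Rightarrow> 's \<Rightarrow> real) \<Rightarrow> bool" where
  "aperiodic S P \<longleftrightarrow> (\<forall>x\<in>S. Gcd {n. n \<ge> 1 \<and> Pn S P n x x > 0} = 1)"

definition stationary :: "'s set \<Rightarrow> ('s \<Rightarrow> 's \<Rightarrow> real) \<Rightarrow> ('s \<Rightarrow> real) \<Rightarrow> bool" where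
  "stationary S P \<pi> \<longleftrightarrow> (\<forall>x\<in>S. \<pi> x \<ge> 0) \<and> (\<Sum>x\<in>S. \<pi> x) = 1
      \<and> (\<forall>y\<in>S. (\<Sum>x\<in>S. \<pi> x * P x y) = \<pi> y)"

definition mean_reward :: "'s set \<Rightarrow> ('s \<Rightarrow> real) \<Rightarrow> ('s \<Rightarrow> real) \<Rightarrow> real" where
  "mean_reward S r \<pi> = (\<Sum>x\<in>S. r x * \<pi> x)"

(* Rested arms on a probability space: Y i k is the state of arm i observed at its
   k-th play (k = 0,1,...); it is a Markov chain with transition matrix P i
   (arbitrary initial distribution), and the arms are independent. *)
definition rested_arms ::
  "'a measure \<Rightarrow> nat \<Rightarrow> (nat \<Rightarrow> 's set) \<Rightarrow> (nat \<Rightarrow> 's \<Rightarrow> 's \<Rightarrow> real)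
   \<Rightarrow> (nat \<Rightarrow> nat \<Rightarrow> 'a \<Rightarrow> 's) \<Rightarrow> bool" where
  "rested_arms \<Omega> K S P Y \<longleftrightarrow>
     prob_space \<Omega>
   \<and> (\<forall>i\<in>{1..K}. \<forall>k. Y i k \<in> measurable \<Omega> (count_space UNIV))
   \<and> (\<forall>i\<in>{1..K}. \<forall>k. \<forall>\<omega>\<in>space \<Omega>. Y i k \<omega> \<in> S i)
   \<and> (\<forall>i\<in>{1..K}. \<forall>k (x::nat \<Rightarrow> 's) y.
        (\<forall>j\<le>k. x j \<in> S i) \<longrightarrow> y \<in> S i \<longrightarrow>
        measure \<Omega> {\<omega>\<in>space \<Omega>. (\<forall>j\<le>k. Y i j \<omega> = x j) \<and> Y i (Suc k) \<omega> = y}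
        = measure \<Omega> {\<omega>\<in>space \<Omega>. \<forall>j\<le>k. Y i j \<omega> = x j} * P i (x k) y)
   \<and> prob_space.indep_vars \<Omega> (\<lambda>_. Pi\<^sub>M UNIV (\<lambda>_. count_space UNIV))
        (\<lambda>i \<omega>. \<lambda>k. Y i k \<omega>) {1..K}"

definition valid_init :: "nat \<Rightarrow> nat \<Rightarrow> (nat \<Rightarrow> nat set) \<Rightarrow> bool" where
  "valid_init K M init \<longleftrightarrow>
     (\<forall>s\<in>{1..K}. init s \<subseteq> {1..K} \<and> card (init s) = M)
   \<and> (\<forall>i\<in>{1..K}. card {s\<in>{1..K}. i \<in> init s} = M)"

definition sample_mean :: "(nat \<Rightarrow> 's \<Rightarrow> real) \<Rightarrow> (nat \<Rightarrow> nat \<Rightarrow> 's) \<Rightarrow> nat \<Rightarrow> nat \<Rightarrow> real" where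
  "sample_mean r obs i k = (\<Sum>j<k. r i (obs i j)) / real k"

definition ucb_index :: "(nat \<Rightarrow> 's \<Rightarrow> real) \<Rightarrow> (nat \<Rightarrow> nat \<Rightarrow> 's) \<Rightarrow> real \<Rightarrow> nat
     \<Rightarrow> (nat \<Rightarrow> nat) \<Rightarrow> nat \<Rightarrow> real" where
  "ucb_index r obs L t c i = sample_mean r obs i (c i) + sqrt (L * ln (real t) / real (c i))"

definition top_M :: "nat \<Rightarrow> nat \<Rightarrow> (nat \<Rightarrow> real) \<Rightarrow> nat set" where
  "top_M K M g = {i\<in>{1..K}. card {j\<in>{1..K}. g j > g i \<or> (g j = g i \<and> j < i)} < M}"

(* set of arms played in slot s, given the play counts c at the end of slot s-1 *)
definition ucbm_choice :: "nat \<Rightarrow> nat \<Rightarrow> real \<Rightarrow> (nat \<Rightarrow> nat set) \<Rightarrow> (nat \<Rightarrow> 's \<Rightarrow> real)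
     \<Rightarrow> (nat \<Rightarrow> nat \<Rightarrow> 's) \<Rightarrow> nat \<Rightarrow> (nat \<Rightarrow> nat) \<Rightarrow> nat set" where
  "ucbm_choice K M L init r obs s c =
     (if s \<le> K then init s else top_M K M (ucb_index r obs L (s - 1) c))"

(* ucbm_count ... t i = T^i(t): number of plays of arm i in slots 1..t *)
primrec ucbm_count :: "nat \<Rightarrow> nat \<Rightarrow> real \<Rightarrow> (nat \<Rightarrow> nat set) \<Rightarrow> (nat \<Rightarrow> 's \<Rightarrow> real)
     \<Rightarrow> (nat \<Rightarrow> nat \<Rightarrow> 's) \<Rightarrow> nat \<Rightarrow> nat \<Rightarrow> nat" where
  "ucbm_count K M L init r obs 0 = (\<lambda>i. 0)"
| "ucbm_count K M L init r obs (Suc t) =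
     (\<lambda>i. ucbm_count K M L init r obs t i
          + (if i \<in> ucbm_choice K M L init r obs (Suc t) (ucbm_count K M L init r obs t) then 1 else 0))"

definition ucbm_played :: "nat \<Rightarrow> nat \<Rightarrow> real \<Rightarrow> (nat \<Rightarrow> nat set) \<Rightarrow> (nat \<Rightarrow> 's \<Rightarrow> real)
     \<Rightarrow> (nat \<Rightarrow> nat \<Rightarrow> 's) \<Rightarrow> nat \<Rightarrow> nat set" where
  "ucbm_played K M L init r obs t =
     ucbm_choice K M L init r obs t (ucbm_count K M L init r obs (t - 1))"

(* total reward collected in slots 1..n; in slot t arm i shows its state after
   T^i(t-1) transitions *)
definition ucbm_total_reward :: "nat \<Rightarrow> nat \<Rightarrow> real \<Rightarrow> (nat \<Rightarrow> nat set) \<Rightarrow> (nat \<Rightarrow> 's \<Rightarrow> real)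
     \<Rightarrow> (nat \<Rightarrow> nat \<Rightarrow> 's) \<Rightarrow> nat \<Rightarrow> real" where
  "ucbm_total_reward K M L init r obs n =
     (\<Sum>t\<in>{1..n}. \<Sum>i\<in>ucbm_played K M L init r obs t.
        r i (obs i (ucbm_count K M L init r obs (t - 1) i)))"

end

theory Submission
  imports Defs "Jordan_Normal_Form.Determinant"
begin

text \<open>For each arm the Poisson equation r - mu = H - P H has a solution H, because an irreducible
  finite chain has no non-constant harmonic functions. Along the successive observations
  Y_0, Y_1, ... of an arm, the rewards of its first N plays then telescope: the sum of r(Y_k) - mu
  over k < N equals H(Y_0) - H(Y_N) plus the increments H(Y_(k+1)) - (P H)(Y_k). Whether the arm is
  played a (k+1)-st time depends only on Y_0, ..., Y_k and on the other arms, which are independent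
  of it, so by the Markov property every increment has mean zero. Hence the expected reward of
  arm i differs from mu_i E[T^i(n)] by at most 2 sum |H|, uniformly in n, L, the initialisation and
  the probability space.\<close>

unbundle no vec_syntax

lemma harmonic_max_spreads:
  fixes g :: "'s \<Rightarrow> real"
  assumes fin: "finite S" and x: "x \<in> S" and st: "stochastic S P"
    and harm: "g x = (\<Sum>y\<in>S. P x y * g y)" and max: "\<forall>y\<in>S. g y \<le> g x"
    and y: "y \<in> S" and pos: "P x y > 0"
  shows "g y = g x"
proof -
  have nonneg: "\<forall>y\<in>S. P x y \<ge> 0" and total: "(\<Sum>y\<in>S. P x y) = 1"
    using st x unfolding stochastic_def by auto
  have "(\<Sum>y\<in>S. P x y * (g x - g y)) = g x * (\<Sum>y\<in>S. P x y) - (\<Sum>y\<in>S. P x y * g y)"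
    by (simp add: algebra_simps sum_subtractf sum_distrib_left)
  also have "\<dots> = 0" using total harm by simp
  finally have "\<forall>y\<in>S. P x y * (g x - g y) = 0"
    using fin nonneg max by (subst (asm) sum_nonneg_eq_0_iff) auto
  then show ?thesis using y pos by auto
qed

lemma harmonic_off_point_le:
  fixes g :: "'s \<Rightarrow> real"
  assumes fin: "finite S" and z: "z \<in> S" and st: "stochastic S P" and irr: "irreducible S P"
    and harm: "\<forall>x\<in>S-{z}. g x = (\<Sum>y\<in>S. P x y * g y)" and x: "x \<in> S"
  shows "g x \<le> g z"
proof -
  have "Max (g ` S) \<in> g ` S" using fin x by (intro Max_in) auto
  then obtain x1 where x1: "x1 \<in> S" "g x1 = Max (g ` S)" by auto
  have max: "\<forall>y\<in>S. g y \<le> g x1" using fin x1 by auto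
  have reach: "\<forall>x\<in>S. g x = g x1 \<longrightarrow> Pn S P n x z > 0 \<longrightarrow> g z = g x1" for n
  proof (induction n)
    case 0
    then show ?case by (auto split: if_splits)
  next
    case (Suc n)
    show ?case
    proof (intro ballI impI)
      fix x assume xS: "x \<in> S" and gx: "g x = g x1" and pos: "Pn S P (Suc n) x z > 0"
      show "g z = g x1"
      proof (cases "x = z")
        case False
        have nonneg: "\<forall>w\<in>S. P x w \<ge> 0" using st xS unfolding stochastic_def by auto
        have "\<not> (\<forall>w\<in>S. P x w * Pn S P n w z \<le> 0)"
          using pos sum_nonpos[of S "\<lambda>w. P x w * Pn S P n w z"] by auto
        then obtain w where w: "w \<in> S" "P x w * Pn S P n w z > 0" by auto
        then have "P x w > 0" "Pn S P n w z > 0"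
          using nonneg by (auto simp: zero_less_mult_iff)
        moreover have "g w = g x"
          by (rule harmonic_max_spreads[OF fin xS st _ _ w(1) calculation(1)])
            (use harm xS False max gx in auto)
        ultimately show ?thesis using Suc.IH w(1) gx by auto
      qed (use gx in simp)
    qed
  qed
  obtain n where "Pn S P n x1 z > 0" using irr x1 z unfolding irreducible_def by auto
  then show ?thesis using reach x1(1) max x by auto
qed

lemma harmonic_off_point_constant:
  fixes g :: "'s \<Rightarrow> real"
  assumes fin: "finite S" and z: "z \<in> S" and st: "stochastic S P" and irr: "irreducible S P"
    and harm: "\<forall>x\<in>S-{z}. g x = (\<Sum>y\<in>S. P x y * g y)" and x: "x \<in> S"
  shows "g x = g z"
proof -
  have "\<forall>x\<in>S-{z}. - g x = (\<Sum>y\<in>S. P x y * - g y)" using harm by (simp add: sum_negf)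
  then have "- g x \<le> - g z" by (rule harmonic_off_point_le[OF fin z st irr _ x])
  moreover have "g x \<le> g z" by (rule harmonic_off_point_le[OF fin z st irr harm x])
  ultimately show ?thesis by simp
qed

lemma injective_linear_system_solvable:
  fixes A :: "'s \<Rightarrow> 's \<Rightarrow> real" and f :: "'s \<Rightarrow> real"
  assumes fin: "finite T"
    and inj: "\<And>g. \<forall>x\<in>T. (\<Sum>y\<in>T. A x y * g y) = 0 \<Longrightarrow> \<forall>x\<in>T. g x = 0"
  shows "\<exists>h. \<forall>x\<in>T. (\<Sum>y\<in>T. A x y * h y) = f x"
proof -
  define m where "m = card T"
  obtain e where e: "bij_betw e {0..<m} T"
    using ex_bij_betw_nat_finite[OF fin] m_def by auto
  define ei where "ei = inv_into {0..<m} e"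
  have ei_e: "ei (e b) = b" if "b < m" for b
    using bij_betw_inv_into_left[OF e] that by (simp add: ei_def)
  have e_ei: "e (ei y) = y" "ei y < m" if "y \<in> T" for y
    using bij_betw_inv_into_right[OF e that] bij_betw_apply[OF bij_betw_inv_into[OF e] that]
    by (simp_all add: ei_def)
  define B :: "real mat" where "B = mat m m (\<lambda>(a, b). A (e a) (e b))"
  have B: "B \<in> carrier_mat m m" by (simp add: B_def)
  have B_mult: "(B *\<^sub>v v) $ ei x = (\<Sum>y\<in>T. A x y * v $ ei y)"
    if "dim_vec v = m" "x \<in> T" for v x
  proof -
    have "(B *\<^sub>v v) $ ei x = (\<Sum>b\<in>{0..<m}. A (e (ei x)) (e b) * v $ ei (e b))"
      using that e_ei[OF that(2)] by (simp add: B_def scalar_prod_def ei_e)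
    also have "\<dots> = (\<Sum>y\<in>T. A x y * v $ ei y)"
      using sum.reindex_bij_betw[OF e, of "\<lambda>y. A x y * v $ ei y"] e_ei[OF that(2)] by simp
    finally show ?thesis .
  qed
  have "det B \<noteq> 0"
  proof
    assume "det B = 0"
    then obtain v where v: "v \<in> carrier_vec m" "v \<noteq> 0\<^sub>v m" "B *\<^sub>v v = 0\<^sub>v m"
      using det_0_iff_vec_prod_zero[OF B] by auto
    have "\<forall>x\<in>T. (\<Sum>y\<in>T. A x y * v $ ei y) = 0"
      using v B_mult e_ei by (metis carrier_vecD index_zero_vec(1))
    then have zero: "\<forall>y\<in>T. v $ ei y = 0" by (rule inj)
    have "v $ b = 0" if "b < m" for b
    proof -
      have "e b \<in> T" using bij_betw_apply[OF e] that by simp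
      then show ?thesis using zero ei_e[OF that] by metis
    qed
    then have "v = 0\<^sub>v m" using v(1) by (intro eq_vecI) auto
    with v(2) show False ..
  qed
  then have "B \<in> Units (ring_mat TYPE(real) m ())" by (rule det_non_zero_imp_unit[OF B])
  then obtain B' where B': "B' \<in> carrier_mat m m" "B * B' = 1\<^sub>m m"
    unfolding Units_def ring_mat_def by auto
  define v where "v = B' *\<^sub>v vec m (\<lambda>a. f (e a))"
  have v: "dim_vec v = m" using B' by (simp add: v_def)
  have "B *\<^sub>v v = vec m (\<lambda>a. f (e a))"
    using assoc_mult_mat_vec[OF B B'(1)] B'(2) by (simp add: v_def)
  then have "\<forall>x\<in>T. (\<Sum>y\<in>T. A x y * v $ ei y) = f x"
    using B_mult[OF v] e_ei by (metis index_vec)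
  then show ?thesis by (intro exI[of _ "\<lambda>y. v $ ei y"])
qed

lemma stationary_obtains_positive:
  assumes "stationary S P \<pi>"
  obtains z where "z \<in> S" "\<pi> z > 0"
proof -
  have "sum \<pi> S = 1" using assms unfolding stationary_def by auto
  then have "\<not> (\<forall>z\<in>S. \<pi> z = 0)" by (metis sum.neutral zero_neq_one)
  moreover have "\<forall>z\<in>S. \<pi> z \<ge> 0" using assms unfolding stationary_def by auto
  ultimately show ?thesis using that by force
qed

lemma stationary_sum_drift_eq_0:
  assumes "stationary S P \<pi>"
  shows "(\<Sum>x\<in>S. \<pi> x * (h x - (\<Sum>y\<in>S. P x y * h y))) = 0"
proof -
  have "(\<Sum>x\<in>S. \<Sum>y\<in>S. \<pi> x * P x y * h y) = (\<Sum>y\<in>S. (\<Sum>x\<in>S. \<pi> x * P x y) * h y)"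
    by (subst sum.swap) (simp add: sum_distrib_right)
  also have "\<dots> = (\<Sum>y\<in>S. \<pi> y * h y)"
    using assms unfolding stationary_def by (intro sum.cong) auto
  finally show ?thesis
    by (simp add: algebra_simps sum_subtractf sum_distrib_left)
qed

lemma poisson_equation_off_point_solvable:
  fixes f :: "'s \<Rightarrow> real"
  assumes fin: "finite S" and z: "z \<in> S" and st: "stochastic S P" and irr: "irreducible S P"
  shows "\<exists>h. \<forall>x\<in>S - {z}. f x = h x - (\<Sum>y\<in>S. P x y * h y)"
proof -
  let ?T = "S - {z}"
  have sum_off_z: "(\<Sum>y\<in>S. P x y * (if y = z then 0 else g y)) = (\<Sum>y\<in>?T. P x y * g y)"
    for x and g :: "'s \<Rightarrow> real"
    using sum.remove[OF fin z, of "\<lambda>y. P x y * (if y = z then 0 else g y)"] by simp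
  have system_eq: "(\<Sum>y\<in>?T. ((if x = y then 1 else 0) - P x y) * g y) = g x - (\<Sum>y\<in>?T. P x y * g y)"
    if "x \<in> ?T" for x and g :: "'s \<Rightarrow> real"
    using that fin by (simp add: left_diff_distrib sum_subtractf if_distrib[of "\<lambda>c. c * _"])
  \<comment> \<open>A solution of the homogeneous system, extended by 0 at z, is harmonic off z and hence constant.\<close>
  have "\<exists>h. \<forall>x\<in>?T. (\<Sum>y\<in>?T. ((if x = y then 1 else 0) - P x y) * h y) = f x"
  proof (rule injective_linear_system_solvable)
    show "finite ?T" using fin by simp
  next
    fix g :: "'s \<Rightarrow> real"
    assume "\<forall>x\<in>?T. (\<Sum>y\<in>?T. ((if x = y then 1 else 0) - P x y) * g y) = 0"
    then have harm: "\<forall>x\<in>?T. (if x = z then 0 else g x) = (\<Sum>y\<in>S. P x y * (if y = z then 0 else g y))"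
      by (simp add: system_eq sum_off_z)
    show "\<forall>x\<in>?T. g x = 0"
    proof
      fix x assume "x \<in> ?T"
      with harmonic_off_point_constant[OF fin z st irr harm, of x] show "g x = 0" by simp
    qed
  qed
  then obtain h where h: "\<forall>x\<in>?T. (\<Sum>y\<in>?T. ((if x = y then 1 else 0) - P x y) * h y) = f x" ..
  have "f x = (if x = z then 0 else h x) - (\<Sum>y\<in>S. P x y * (if y = z then 0 else h y))"
    if "x \<in> ?T" for x
    using bspec[OF h that] system_eq[OF that, of h] that by (simp add: sum_off_z)
  then show ?thesis by (intro exI[of _ "\<lambda>y. if y = z then 0 else h y"]) simp
qed

lemma poisson_equation_solvable:
  fixes f :: "'s \<Rightarrow> real"
  assumes fin: "finite S" and st: "stochastic S P" and irr: "irreducible S P"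
    and sta: "stationary S P \<pi>" and centred: "(\<Sum>x\<in>S. \<pi> x * f x) = 0"
  shows "\<exists>h. \<forall>x\<in>S. f x = h x - (\<Sum>y\<in>S. P x y * h y)"
proof -
  obtain z where z: "z \<in> S" "\<pi> z > 0" using stationary_obtains_positive[OF sta] .
  obtain h where off_z: "\<forall>x\<in>S - {z}. f x = h x - (\<Sum>y\<in>S. P x y * h y)"
    using poisson_equation_off_point_solvable[OF fin z(1) st irr] ..
  let ?err = "\<lambda>x. \<pi> x * (f x - (h x - (\<Sum>y\<in>S. P x y * h y)))"
  have "(\<Sum>x\<in>S. ?err x) = 0"
    using centred stationary_sum_drift_eq_0[OF sta, of h] by (simp add: right_diff_distrib sum_subtractf)
  moreover have "(\<Sum>x\<in>S - {z}. ?err x) = 0"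
    using off_z by (intro sum.neutral) simp
  ultimately have "?err z = 0"
    using sum.remove[OF fin z(1), of ?err] by simp
  then have "f z = h z - (\<Sum>y\<in>S. P z y * h y)" using z(2) by simp
  then show ?thesis using off_z by (intro exI[of _ h]) blast
qed

lemma poisson_equation_reward:
  assumes "finite S" "stochastic S P" "irreducible S P" "stationary S P \<pi>"
  shows "\<exists>H. \<forall>x\<in>S. r x - mean_reward S r \<pi> = H x - (\<Sum>y\<in>S. P x y * H y)"
proof (rule poisson_equation_solvable[OF assms])
  have "(\<Sum>x\<in>S. \<pi> x * (r x - mean_reward S r \<pi>))
      = (\<Sum>x\<in>S. r x * \<pi> x) - mean_reward S r \<pi> * sum \<pi> S"
    by (simp add: algebra_simps sum_subtractf sum_distrib_right)
  then show "(\<Sum>x\<in>S. \<pi> x * (r x - mean_reward S r \<pi>)) = 0"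
    using assms(4) unfolding stationary_def by (simp add: mean_reward_def)
qed

definition prefix_agree :: "nat \<Rightarrow> (nat \<Rightarrow> nat) \<Rightarrow> (nat \<Rightarrow> nat \<Rightarrow> 's) \<Rightarrow> (nat \<Rightarrow> nat \<Rightarrow> 's) \<Rightarrow> bool" where
  "prefix_agree K b obs obs' \<longleftrightarrow> (\<forall>j\<in>{1..K}. \<forall>m<b j. obs j m = obs' j m)"

lemma prefix_agree_sym: "prefix_agree K b obs obs' \<Longrightarrow> prefix_agree K b obs' obs"
  unfolding prefix_agree_def by simp

lemma prefix_agree_mono:
  "prefix_agree K b obs obs' \<Longrightarrow> (\<And>j. j \<in> {1..K} \<Longrightarrow> b' j \<le> b j) \<Longrightarrow> prefix_agree K b' obs obs'"
  unfolding prefix_agree_def by (meson order_less_le_trans)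

text \<open>An observation array obs j m is the state of arm j seen at its m-th play. A count N of
  plays of arm i up to horizon n is a stopping count if whether arm i gets a (k+1)-st play is decided
  by its first k+1 observations together with the first n observations of the other arms.\<close>

definition stopping_count :: "nat \<Rightarrow> nat \<Rightarrow> nat \<Rightarrow> ((nat \<Rightarrow> nat \<Rightarrow> 's) \<Rightarrow> nat) \<Rightarrow> bool" where
  "stopping_count K i n N \<longleftrightarrow> (\<forall>obs. N obs \<le> n) \<and>
     (\<forall>k obs obs'. prefix_agree K (\<lambda>j. if j = i then Suc k else n) obs obs' \<longrightarrow> (k < N obs \<longleftrightarrow> k < N obs'))"

lemma stopping_countD:
  assumes "stopping_count K i n N"
  shows "N obs \<le> n"
    and "prefix_agree K (\<lambda>j. if j = i then Suc k else n) obs obs' \<Longrightarrow> k < N obs \<longleftrightarrow> k < N obs'"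
  using assms unfolding stopping_count_def by blast+

lemma stopping_count_prefix_determined:
  assumes N: "stopping_count K i n N" and agree: "prefix_agree K (\<lambda>_. Suc n) obs obs'"
  shows "N obs = N obs'"
proof -
  have "k < N obs \<longleftrightarrow> k < N obs'" for k
  proof (cases "k < n")
    case True
    then have "prefix_agree K (\<lambda>j. if j = i then Suc k else n) obs obs'"
      by (intro prefix_agree_mono[OF agree]) auto
    then show ?thesis by (rule stopping_countD(2)[OF N])
  next
    case False
    then show ?thesis using stopping_countD(1)[OF N] by (meson order_less_le_trans)
  qed
  then show ?thesis by (metis linorder_neqE_nat less_irrefl)
qed

lemma ucbm_count_le: "ucbm_count K M L init r obs t i \<le> t"
  by (induction t) auto

lemma top_M_subset: "top_M K M g \<subseteq> {1..K}"
  unfolding top_M_def by auto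

lemma top_M_cong: "(\<And>j. j \<in> {1..K} \<Longrightarrow> g j = g' j) \<Longrightarrow> top_M K M g = top_M K M g'"
  unfolding top_M_def
  by (intro Collect_cong conj_cong refl arg_cong2[where f = "(<)"] arg_cong[where f = card]) auto

lemma ucbm_choice_subset:
  "valid_init K M init \<Longrightarrow> 1 \<le> s \<Longrightarrow> ucbm_choice K M L init r obs s c \<subseteq> {1..K}"
  using top_M_subset unfolding ucbm_choice_def valid_init_def by auto

lemma ucbm_total_reward_eq_sum_arms:
  assumes vi: "valid_init K M init"
  shows "ucbm_total_reward K M L init r obs n =
    (\<Sum>i\<in>{1..K}. \<Sum>k<ucbm_count K M L init r obs n i. r i (obs i k))"
proof (induction n)
  case 0
  then show ?case by (simp add: ucbm_total_reward_def)
next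
  case (Suc n)
  let ?c = "ucbm_count K M L init r obs"
  let ?A = "ucbm_choice K M L init r obs (Suc n) (?c n)"
  have sub: "?A \<subseteq> {1..K}" by (rule ucbm_choice_subset[OF vi]) simp
  have "ucbm_total_reward K M L init r obs (Suc n) = ucbm_total_reward K M L init r obs n
        + (\<Sum>i\<in>?A. r i (obs i (?c n i)))"
    unfolding ucbm_total_reward_def ucbm_played_def by (simp add: add.commute)
  also have "(\<Sum>i\<in>?A. r i (obs i (?c n i))) = (\<Sum>i\<in>{1..K}. if i \<in> ?A then r i (obs i (?c n i)) else 0)"
    using sub by (simp add: sum.inter_restrict[symmetric] Int_absorb1 Int_commute)
  also have "ucbm_total_reward K M L init r obs n + \<dots> =
     (\<Sum>i\<in>{1..K}. (\<Sum>k<?c n i. r i (obs i k)) + (if i \<in> ?A then r i (obs i (?c n i)) else 0))"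
    using Suc by (simp add: sum.distrib)
  also have "\<dots> = (\<Sum>i\<in>{1..K}. \<Sum>k<?c (Suc n) i. r i (obs i k))"
    by (rule sum.cong) auto
  finally show ?case .
qed

lemma ucbm_count_prefix_determined:
  assumes agree: "prefix_agree K b obs obs'"
    and bi: "k \<le> b i" and bj: "\<forall>j\<in>{1..K}. j \<noteq> i \<longrightarrow> t \<le> b j"
    and le: "ucbm_count K M L init r obs t i \<le> k"
  shows "ucbm_count K M L init r obs' t = ucbm_count K M L init r obs t"
  using bj le
proof (induction t)
  case 0
  then show ?case by simp
next
  case (Suc t)
  let ?c = "ucbm_count K M L init r obs"
  have le': "?c t i \<le> k" using Suc.prems(2) by (simp split: if_splits)
  have IH: "ucbm_count K M L init r obs' t = ?c t" using Suc.IH Suc.prems(1) le' by force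
  have ucb: "ucb_index r obs' L t (?c t) j = ucb_index r obs L t (?c t) j" if j: "j \<in> {1..K}" for j
  proof -
    have "?c t j \<le> b j"
      using le' bi Suc.prems(1) j ucbm_count_le[of K M L init r obs t j] by (cases "j = i") auto
    then have "\<forall>m<?c t j. obs' j m = obs j m" using agree j unfolding prefix_agree_def by auto
    then show ?thesis unfolding ucb_index_def sample_mean_def by simp
  qed
  have "ucbm_choice K M L init r obs' (Suc t) (?c t) = ucbm_choice K M L init r obs (Suc t) (?c t)"
    unfolding ucbm_choice_def
    using top_M_cong[of K "ucb_index r obs' L t (?c t)" "ucb_index r obs L t (?c t)" M] ucb by simp
  then show ?case using IH by simp
qed

lemma ucbm_count_stopping:
  fixes r :: "nat \<Rightarrow> 's \<Rightarrow> real"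
  shows "stopping_count K i n (\<lambda>obs. ucbm_count K M L init r obs n i)"
  unfolding stopping_count_def
proof (intro conjI allI impI)
  fix k and obs obs' :: "nat \<Rightarrow> nat \<Rightarrow> 's"
  assume agree: "prefix_agree K (\<lambda>j. if j = i then Suc k else n) obs obs'"
  have "ucbm_count K M L init r obs2 n = ucbm_count K M L init r obs1 n"
    if "prefix_agree K (\<lambda>j. if j = i then Suc k else n) obs1 obs2"
      "\<not> k < ucbm_count K M L init r obs1 n i" for obs1 obs2
    using ucbm_count_prefix_determined[OF that(1), of k i n M L init r] that(2) by (simp add: not_less)
  then show "k < ucbm_count K M L init r obs n i \<longleftrightarrow> k < ucbm_count K M L init r obs' n i"
    using agree prefix_agree_sym by metis
qed (rule ucbm_count_le)

lemma integral_finite_valued: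
  fixes W :: "'a \<Rightarrow> 'b" and G :: "'b \<Rightarrow> real" and F :: "'a \<Rightarrow> real"
  assumes fm: "finite_measure M" and fR: "finite R" and WR: "\<forall>\<omega>\<in>space M. W \<omega> \<in> R"
    and fib: "\<forall>v\<in>R. {\<omega>\<in>space M. W \<omega> = v} \<in> sets M"
    and FG: "\<forall>\<omega>\<in>space M. F \<omega> = G (W \<omega>)"
  shows "integrable M F \<and> integral\<^sup>L M F = (\<Sum>v\<in>R. G v * measure M {\<omega>\<in>space M. W \<omega> = v})"
proof -
  interpret finite_measure M by (rule fm)
  define F' where "F' = (\<lambda>\<omega>. \<Sum>v\<in>R. G v * indicator {\<omega>\<in>space M. W \<omega> = v} \<omega>)"
  have eq: "F \<omega> = F' \<omega>" if "\<omega> \<in> space M" for \<omega>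
  proof -
    have "F' \<omega> = (\<Sum>v\<in>R. if v = W \<omega> then G v else 0)"
      unfolding F'_def by (rule sum.cong) (auto simp: indicator_def that)
    then show ?thesis using FG WR that fR by simp
  qed
  have ind: "integrable M (indicator {\<omega>\<in>space M. W \<omega> = v} :: 'a \<Rightarrow> real)" if "v \<in> R" for v
    using fib that by (intro integrable_real_indicator) (auto simp: less_top[symmetric])
  have "integrable M F'" unfolding F'_def using ind by (intro Bochner_Integration.integrable_sum integrable_mult_right)
  moreover have "integral\<^sup>L M F' = (\<Sum>v\<in>R. G v * measure M {\<omega>\<in>space M. W \<omega> = v})"
    unfolding F'_def using fib ind by (subst Bochner_Integration.integral_sum) (auto intro!: sum.cong)
  moreover have "integrable M F \<longleftrightarrow> integrable M F'"
    using eq by (intro Bochner_Integration.integrable_cong) auto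
  moreover have "integral\<^sup>L M F = integral\<^sup>L M F'"
    using eq by (intro Bochner_Integration.integral_cong) auto
  ultimately show ?thesis by simp
qed

text \<open>The restriction to finite index sets makes the observed prefix a finite-valued random variable.\<close>

definition prefix_of :: "nat \<Rightarrow> (nat \<Rightarrow> nat) \<Rightarrow> (nat \<Rightarrow> nat \<Rightarrow> 'a \<Rightarrow> 's) \<Rightarrow> 'a \<Rightarrow> nat \<Rightarrow> nat \<Rightarrow> 's" where
  "prefix_of K b Y \<omega> = (\<lambda>j\<in>{1..K}. \<lambda>m\<in>{..<b j}. Y j m \<omega>)"

definition prefix_space :: "nat \<Rightarrow> (nat \<Rightarrow> nat) \<Rightarrow> (nat \<Rightarrow> 's set) \<Rightarrow> (nat \<Rightarrow> nat \<Rightarrow> 's) set" where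
  "prefix_space K b S = (\<Pi>\<^sub>E j\<in>{1..K}. \<Pi>\<^sub>E m\<in>{..<b j}. S j)"

lemma finite_prefix_space: "\<forall>i\<in>{1..K}. finite (S i) \<Longrightarrow> finite (prefix_space K b S)"
  unfolding prefix_space_def by (intro finite_PiE) auto

lemma prefix_of_in_prefix_space:
  "rested_arms \<Omega> K S P Y \<Longrightarrow> \<omega> \<in> space \<Omega> \<Longrightarrow> prefix_of K b Y \<omega> \<in> prefix_space K b S"
  unfolding prefix_of_def prefix_space_def rested_arms_def by auto

lemma prefix_agree_prefix_of: "prefix_agree K b (prefix_of K b Y \<omega>) (\<lambda>j m. Y j m \<omega>)"
  unfolding prefix_agree_def prefix_of_def by auto

lemma prefix_of_eq_iff:
  assumes v: "v \<in> prefix_space K b S"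
  shows "prefix_of K b Y \<omega> = v \<longleftrightarrow> prefix_agree K b (\<lambda>j m. Y j m \<omega>) v"
proof
  assume agree: "prefix_agree K b (\<lambda>j m. Y j m \<omega>) v"
  show "prefix_of K b Y \<omega> = v"
  proof
    fix j
    show "prefix_of K b Y \<omega> j = v j"
    proof (cases "j \<in> {1..K}")
      case True
      then have "v j \<in> (\<Pi>\<^sub>E m\<in>{..<b j}. S j)" using v unfolding prefix_space_def by auto
      then show ?thesis using agree True unfolding prefix_of_def prefix_agree_def
        by (auto simp: PiE_iff extensional_def fun_eq_iff)
    next
      case False
      then show ?thesis using v unfolding prefix_of_def prefix_space_def by (auto simp: PiE_iff extensional_def)
    qed
  qed
qed (auto simp: prefix_of_def prefix_agree_def)

lemma sets_arm_state_eq: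
  "rested_arms \<Omega> K S P Y \<Longrightarrow> j \<in> {1..K} \<Longrightarrow> {\<omega>\<in>space \<Omega>. Y j m \<omega> = x} \<in> sets \<Omega>"
proof -
  assume "rested_arms \<Omega> K S P Y" "j \<in> {1..K}"
  then have "Y j m \<in> measurable \<Omega> (count_space UNIV)" unfolding rested_arms_def by auto
  from measurable_sets[OF this, of "{x}"] show ?thesis by (simp add: vimage_def Int_def conj_commute)
qed

lemma sets_prefix_of_eq:
  assumes ra: "rested_arms \<Omega> K S P Y" and v: "v \<in> prefix_space K b S"
  shows "{\<omega>\<in>space \<Omega>. prefix_of K b Y \<omega> = v} \<in> sets \<Omega>"
proof -
  have "{\<omega>\<in>space \<Omega>. prefix_of K b Y \<omega> = v} = {\<omega>\<in>space \<Omega>. \<forall>j\<in>{1..K}. \<forall>m\<in>{..<b j}. Y j m \<omega> = v j m}"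
    using prefix_of_eq_iff[OF v, of Y] unfolding prefix_agree_def by auto
  also have "\<dots> \<in> sets \<Omega>"
    by (intro sets.sets_Collect_finite_All sets_arm_state_eq[OF ra]) auto
  finally show ?thesis .
qed

lemma sets_PiM_count_space_cylinder:
  assumes "finite I"
  shows "{f :: nat \<Rightarrow> 's. \<forall>m\<in>I. f m = c m} \<in> sets (\<Pi>\<^sub>M m\<in>UNIV. count_space UNIV)"
proof -
  have "{f \<in> space (\<Pi>\<^sub>M m\<in>UNIV. count_space UNIV). \<forall>m\<in>I. f m = c m}
      \<in> sets (\<Pi>\<^sub>M m\<in>UNIV. count_space (UNIV :: 's set))"
  proof (intro sets.sets_Collect_finite_All[OF _ assms])
    fix m :: nat
    have "(\<lambda>f. f m) \<in> measurable (\<Pi>\<^sub>M m\<in>UNIV. count_space UNIV) (count_space (UNIV :: 's set))"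
      by (rule measurable_component_singleton) simp
    from measurable_sets[OF this, of "{c m}"]
    show "{f \<in> space (\<Pi>\<^sub>M m\<in>UNIV. count_space UNIV). f m = c m} \<in> sets (\<Pi>\<^sub>M m\<in>UNIV. count_space (UNIV :: 's set))"
      by (simp add: vimage_def Int_def conj_commute)
  qed
  then show ?thesis by (simp add: space_PiM)
qed

lemma integrable_prefix_factor:
  fixes G :: "(nat \<Rightarrow> nat \<Rightarrow> 's) \<Rightarrow> real" and F :: "'a \<Rightarrow> real"
  assumes ra: "rested_arms \<Omega> K S P Y" and fS: "\<forall>i\<in>{1..K}. finite (S i)"
    and FG: "\<forall>\<omega>\<in>space \<Omega>. F \<omega> = G (prefix_of K b Y \<omega>)"
  shows "integrable \<Omega> F"
proof -
  have "finite_measure \<Omega>" using ra by (simp add: rested_arms_def prob_space.finite_measure)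
  from integral_finite_valued[OF this finite_prefix_space[OF fS, where b = b],
      where W = "prefix_of K b Y" and F = F and G = G]
  show ?thesis using ra FG by (auto simp: prefix_of_in_prefix_space sets_prefix_of_eq)
qed

lemma rested_arms_measure_Inter_split:
  assumes ra: "rested_arms \<Omega> K S P Y" and i: "i \<in> {1..K}"
    and B: "\<And>j. B j \<in> sets (\<Pi>\<^sub>M m\<in>UNIV. count_space UNIV)"
  shows "measure \<Omega> (\<Inter>j\<in>{1..K}. (\<lambda>\<omega> m. Y j m \<omega>) -` B j \<inter> space \<Omega>)
    = measure \<Omega> ((\<lambda>\<omega> m. Y i m \<omega>) -` B i \<inter> space \<Omega>)
      * (\<Prod>j\<in>{1..K} - {i}. measure \<Omega> ((\<lambda>\<omega> m. Y j m \<omega>) -` B j \<inter> space \<Omega>))"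
proof -
  interpret prob_space \<Omega> using ra unfolding rested_arms_def by auto
  have "indep_vars (\<lambda>_. \<Pi>\<^sub>M m\<in>UNIV. count_space UNIV) (\<lambda>j \<omega> m. Y j m \<omega>) {1..K}"
    using ra unfolding rested_arms_def by auto
  from indep_varsD_finite[OF this, of B] B i
  show ?thesis by (simp add: prod.remove)
qed

lemma prefix_markov_step:
  assumes ra: "rested_arms \<Omega> K S P Y" and i: "i \<in> {1..K}" and bi: "b i = Suc k"
    and v: "v \<in> prefix_space K b S" and y: "y \<in> S i"
  shows "measure \<Omega> {\<omega>\<in>space \<Omega>. prefix_of K b Y \<omega> = v \<and> Y i (Suc k) \<omega> = y}
       = measure \<Omega> {\<omega>\<in>space \<Omega>. prefix_of K b Y \<omega> = v} * P i (v i k) y"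
proof -
  let ?PM = "\<Pi>\<^sub>M m\<in>UNIV. count_space (UNIV :: 's set)"
  let ?X = "\<lambda>j \<omega> m. Y j m \<omega>"
  define A where "A j = {f. \<forall>m\<in>{..<b j}. f m = v j m}" for j
  define A' where "A' j = {f. (\<forall>m\<in>{..<b j}. f m = v j m) \<and> (j = i \<longrightarrow> f (Suc k) = y)}" for j
  have sets_A: "A j \<in> sets ?PM" for j
    unfolding A_def by (simp add: sets_PiM_count_space_cylinder)
  have sets_A': "A' j \<in> sets ?PM" for j
  proof -
    have "A' j = A j \<inter> (if j = i then {f. \<forall>m\<in>{Suc k}. f m = y} else UNIV)"
      unfolding A_def A'_def by auto
    moreover have "{f. \<forall>m\<in>{Suc k}. f m = y} \<in> sets ?PM"
      by (rule sets_PiM_count_space_cylinder) simp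
    ultimately show ?thesis using sets_A[of j] by auto
  qed
  have "{\<omega>\<in>space \<Omega>. prefix_of K b Y \<omega> = v} = (\<Inter>j\<in>{1..K}. ?X j -` A j \<inter> space \<Omega>)"
    using prefix_of_eq_iff[OF v, of Y] i unfolding prefix_agree_def A_def by auto
  then have prefix_prob: "measure \<Omega> {\<omega>\<in>space \<Omega>. prefix_of K b Y \<omega> = v}
      = measure \<Omega> (?X i -` A i \<inter> space \<Omega>) * (\<Prod>j\<in>{1..K} - {i}. measure \<Omega> (?X j -` A j \<inter> space \<Omega>))"
    using rested_arms_measure_Inter_split[OF ra i sets_A] by simp
  have "{\<omega>\<in>space \<Omega>. prefix_of K b Y \<omega> = v \<and> Y i (Suc k) \<omega> = y} = (\<Inter>j\<in>{1..K}. ?X j -` A' j \<inter> space \<Omega>)"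
    using prefix_of_eq_iff[OF v, of Y] i unfolding prefix_agree_def A'_def by auto
  moreover have "(\<Prod>j\<in>{1..K} - {i}. measure \<Omega> (?X j -` A' j \<inter> space \<Omega>))
      = (\<Prod>j\<in>{1..K} - {i}. measure \<Omega> (?X j -` A j \<inter> space \<Omega>))"
    by (intro prod.cong) (auto simp: A_def A'_def)
  ultimately have "measure \<Omega> {\<omega>\<in>space \<Omega>. prefix_of K b Y \<omega> = v \<and> Y i (Suc k) \<omega> = y}
      = measure \<Omega> (?X i -` A' i \<inter> space \<Omega>) * (\<Prod>j\<in>{1..K} - {i}. measure \<Omega> (?X j -` A j \<inter> space \<Omega>))"
    using rested_arms_measure_Inter_split[OF ra i sets_A'] by simp
  moreover have "measure \<Omega> (?X i -` A' i \<inter> space \<Omega>) = measure \<Omega> (?X i -` A i \<inter> space \<Omega>) * P i (v i k) y"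
  proof -
    have "\<forall>j\<le>k. v i j \<in> S i" using v i bi unfolding prefix_space_def by (auto simp: PiE_iff)
    moreover have "?X i -` A' i \<inter> space \<Omega> = {\<omega>\<in>space \<Omega>. (\<forall>j\<le>k. Y i j \<omega> = v i j) \<and> Y i (Suc k) \<omega> = y}"
      "?X i -` A i \<inter> space \<Omega> = {\<omega>\<in>space \<Omega>. \<forall>j\<le>k. Y i j \<omega> = v i j}"
      unfolding A'_def A_def using bi by (auto simp: less_Suc_eq_le)
    ultimately show ?thesis using ra i y unfolding rested_arms_def by simp
  qed
  ultimately show ?thesis using prefix_prob by simp
qed

lemma stochastic_centred_sum_eq_0:
  assumes "stochastic S P" "x \<in> S"
  shows "(\<Sum>y\<in>S. P x y * (h y - (\<Sum>y'\<in>S. P x y' * h y'))) = 0"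
proof -
  have "(\<Sum>y\<in>S. P x y) = 1" using assms unfolding stochastic_def by auto
  then show ?thesis by (simp add: right_diff_distrib sum_subtractf flip: sum_distrib_right)
qed

lemma integral_prefix_step_factor:
  fixes G :: "(nat \<Rightarrow> nat \<Rightarrow> 's) \<times> 's \<Rightarrow> real" and Y :: "nat \<Rightarrow> nat \<Rightarrow> 'a \<Rightarrow> 's"
  assumes ra: "rested_arms \<Omega> K S P Y" and fS: "\<forall>j\<in>{1..K}. finite (S j)" and i: "i \<in> {1..K}"
    and DG: "\<forall>\<omega>\<in>space \<Omega>. D \<omega> = G (prefix_of K b Y \<omega>, Y i (Suc k) \<omega>)"
  shows "integrable \<Omega> D \<and> integral\<^sup>L \<Omega> D = (\<Sum>v\<in>prefix_space K b S. \<Sum>y\<in>S i.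
      G (v, y) * measure \<Omega> {\<omega>\<in>space \<Omega>. prefix_of K b Y \<omega> = v \<and> Y i (Suc k) \<omega> = y})"
proof -
  define W where "W \<omega> = (prefix_of K b Y \<omega>, Y i (Suc k) \<omega>)" for \<omega>
  have fm: "finite_measure \<Omega>" using ra by (simp add: rested_arms_def prob_space.finite_measure)
  have fin: "finite (prefix_space K b S \<times> S i)" using finite_prefix_space[OF fS] fS i by auto
  have range: "\<forall>\<omega>\<in>space \<Omega>. W \<omega> \<in> prefix_space K b S \<times> S i"
    using prefix_of_in_prefix_space[OF ra] ra i unfolding W_def rested_arms_def by auto
  have fib: "{\<omega>\<in>space \<Omega>. W \<omega> = (v, y)}
      = {\<omega>\<in>space \<Omega>. prefix_of K b Y \<omega> = v} \<inter> {\<omega>\<in>space \<Omega>. Y i (Suc k) \<omega> = y}" for v y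
    by (auto simp: W_def)
  have meas: "\<forall>vy\<in>prefix_space K b S \<times> S i. {\<omega>\<in>space \<Omega>. W \<omega> = vy} \<in> sets \<Omega>"
    using sets_prefix_of_eq[OF ra] sets_arm_state_eq[OF ra i] by (auto simp: fib)
  have sum_eq: "(\<Sum>vy\<in>prefix_space K b S \<times> S i. G vy * measure \<Omega> {\<omega>\<in>space \<Omega>. W \<omega> = vy})
      = (\<Sum>v\<in>prefix_space K b S. \<Sum>y\<in>S i.
          G (v, y) * measure \<Omega> {\<omega>\<in>space \<Omega>. prefix_of K b Y \<omega> = v \<and> Y i (Suc k) \<omega> = y})"
    unfolding sum.cartesian_product by (intro sum.cong refl) (auto simp: W_def)
  have "\<forall>\<omega>\<in>space \<Omega>. D \<omega> = G (W \<omega>)" using DG by (simp add: W_def)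
  from integral_finite_valued[OF fm fin range meas this] show ?thesis by (simp only: sum_eq)
qed

lemma integral_martingale_difference_eq_0:
  fixes h :: "'s \<Rightarrow> real" and N :: "(nat \<Rightarrow> nat \<Rightarrow> 's) \<Rightarrow> nat" and k :: nat
  assumes ra: "rested_arms \<Omega> K S P Y" and fS: "\<forall>j\<in>{1..K}. finite (S j)" and i: "i \<in> {1..K}"
    and st: "stochastic (S i) (P i)" and N: "stopping_count K i n N"
  defines "D \<equiv> \<lambda>\<omega>. if k < N (\<lambda>j m. Y j m \<omega>)
      then h (Y i (Suc k) \<omega>) - (\<Sum>y\<in>S i. P i (Y i k \<omega>) y * h y) else 0"
  shows "integrable \<Omega> D \<and> integral\<^sup>L \<Omega> D = 0"
proof -
  let ?b = "\<lambda>j. if j = i then Suc k else n"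
  define G where "G = (\<lambda>(v, y). if k < N v then h y - (\<Sum>y'\<in>S i. P i (v i k) y' * h y') else 0)"
  let ?m = "\<lambda>v. measure \<Omega> {\<omega>\<in>space \<Omega>. prefix_of K ?b Y \<omega> = v}"
  have "\<forall>\<omega>\<in>space \<Omega>. D \<omega> = G (prefix_of K ?b Y \<omega>, Y i (Suc k) \<omega>)"
  proof
    fix \<omega>
    have "k < N (\<lambda>j m. Y j m \<omega>) \<longleftrightarrow> k < N (prefix_of K ?b Y \<omega>)"
      by (rule stopping_countD(2)[OF N prefix_agree_sym[OF prefix_agree_prefix_of]])
    moreover have "prefix_of K ?b Y \<omega> i k = Y i k \<omega>" using i by (simp add: prefix_of_def)
    ultimately show "D \<omega> = G (prefix_of K ?b Y \<omega>, Y i (Suc k) \<omega>)" by (simp add: D_def G_def)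
  qed
  note factor = integral_prefix_step_factor[OF ra fS i this]
  \<comment> \<open>Given the prefix, whether k < N is decided and the next state of arm i has law P i (v i k).\<close>
  have "(\<Sum>y\<in>S i. G (v, y) * measure \<Omega> {\<omega>\<in>space \<Omega>. prefix_of K ?b Y \<omega> = v \<and> Y i (Suc k) \<omega> = y}) = 0"
    if v: "v \<in> prefix_space K ?b S" for v
  proof -
    have "(\<Sum>y\<in>S i. G (v, y) * measure \<Omega> {\<omega>\<in>space \<Omega>. prefix_of K ?b Y \<omega> = v \<and> Y i (Suc k) \<omega> = y})
        = (if k < N v then ?m v else 0) * (\<Sum>y\<in>S i. P i (v i k) y * (h y - (\<Sum>y'\<in>S i. P i (v i k) y' * h y')))"
      unfolding sum_distrib_left
      by (intro sum.cong refl) (simp add: prefix_markov_step[OF ra i _ v] G_def)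
    also have "\<dots> = 0"
      using v i stochastic_centred_sum_eq_0[OF st] unfolding prefix_space_def by (auto simp: PiE_iff)
    finally show ?thesis .
  qed
  then show ?thesis using factor by simp
qed

lemma poisson_telescope:
  fixes X :: "nat \<Rightarrow> 's" and H r :: "'s \<Rightarrow> real"
  assumes pois: "\<forall>x\<in>S. r x - \<mu> = H x - (\<Sum>y\<in>S. P x y * H y)" and X: "\<forall>k. X k \<in> S" and N: "N \<le> n"
  shows "(\<Sum>k<N. r (X k)) - \<mu> * real N = H (X 0) - H (X N)
           + (\<Sum>k<n. if k < N then H (X (Suc k)) - (\<Sum>y\<in>S. P (X k) y * H y) else 0)"
proof -
  let ?PH = "\<lambda>x. \<Sum>y\<in>S. P x y * H y"
  have "(\<Sum>k<N. r (X k)) - \<mu> * real N = (\<Sum>k<N. r (X k) - \<mu>)"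
    by (simp add: sum_subtractf)
  also have "\<dots> = (\<Sum>k<N. H (X k) - ?PH (X k))"
    using pois X by (intro sum.cong) auto
  also have "\<dots> = (\<Sum>k<N. H (X k) - H (X (Suc k))) + (\<Sum>k<N. H (X (Suc k)) - ?PH (X k))"
    by (simp add: sum.distrib[symmetric])
  also have "(\<Sum>k<N. H (X k) - H (X (Suc k))) = H (X 0) - H (X N)"
    by (rule sum_lessThan_telescope')
  also have "(\<Sum>k<N. H (X (Suc k)) - ?PH (X k)) = (\<Sum>k<n. if k < N then H (X (Suc k)) - ?PH (X k) else 0)"
    using N by (simp add: sum.If_cases Int_absorb1 flip: lessThan_def)
  finally show ?thesis .
qed

lemma abs_integral_arm_observation_le:
  fixes H :: "'s \<Rightarrow> real" and f :: "'a \<Rightarrow> nat" and Y :: "nat \<Rightarrow> nat \<Rightarrow> 'a \<Rightarrow> 's"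
  assumes ra: "rested_arms \<Omega> K S P Y" and i: "i \<in> {1..K}" and fin: "finite (S i)"
    and int: "integrable \<Omega> (\<lambda>\<omega>. H (Y i (f \<omega>) \<omega>))"
  shows "\<bar>integral\<^sup>L \<Omega> (\<lambda>\<omega>. H (Y i (f \<omega>) \<omega>))\<bar> \<le> (\<Sum>x\<in>S i. \<bar>H x\<bar>)"
proof -
  interpret prob_space \<Omega> using ra unfolding rested_arms_def by auto
  have "\<bar>H (Y i (f \<omega>) \<omega>)\<bar> \<le> (\<Sum>x\<in>S i. \<bar>H x\<bar>)" if "\<omega> \<in> space \<Omega>" for \<omega>
    using ra i that fin unfolding rested_arms_def by (intro member_le_sum) auto
  then have "H (Y i (f \<omega>) \<omega>) \<le> (\<Sum>x\<in>S i. \<bar>H x\<bar>)" "- H (Y i (f \<omega>) \<omega>) \<le> (\<Sum>x\<in>S i. \<bar>H x\<bar>)"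
    if "\<omega> \<in> space \<Omega>" for \<omega>
    using that by (auto simp: abs_le_iff)
  then have "integral\<^sup>L \<Omega> (\<lambda>\<omega>. H (Y i (f \<omega>) \<omega>)) \<le> (\<Sum>x\<in>S i. \<bar>H x\<bar>)"
    and "integral\<^sup>L \<Omega> (\<lambda>\<omega>. - H (Y i (f \<omega>) \<omega>)) \<le> (\<Sum>x\<in>S i. \<bar>H x\<bar>)"
    using int by (intro integral_le_const AE_I2; simp)+
  then show ?thesis by simp
qed

lemma integrable_stopped_observations:
  fixes r H :: "'s \<Rightarrow> real" and N :: "(nat \<Rightarrow> nat \<Rightarrow> 's) \<Rightarrow> nat" and Y :: "nat \<Rightarrow> nat \<Rightarrow> 'a \<Rightarrow> 's"
  assumes ra: "rested_arms \<Omega> K S P Y" and fS: "\<forall>j\<in>{1..K}. finite (S j)" and i: "i \<in> {1..K}"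
    and N: "stopping_count K i n N"
  shows "integrable \<Omega> (\<lambda>\<omega>. \<Sum>k<N (\<lambda>j m. Y j m \<omega>). r (Y i k \<omega>))"
    and "integrable \<Omega> (\<lambda>\<omega>. real (N (\<lambda>j m. Y j m \<omega>)))"
    and "integrable \<Omega> (\<lambda>\<omega>. H (Y i 0 \<omega>))"
    and "integrable \<Omega> (\<lambda>\<omega>. H (Y i (N (\<lambda>j m. Y j m \<omega>)) \<omega>))"
proof -
  let ?obs = "\<lambda>\<omega> j m. Y j m \<omega>"
  let ?pre = "prefix_of K (\<lambda>_. Suc n) Y"
  have N_le: "N (?obs \<omega>) \<le> n" for \<omega> by (rule stopping_countD(1)[OF N])
  have N_pre: "N (?pre \<omega>) = N (?obs \<omega>)" for \<omega>
    by (rule stopping_count_prefix_determined[OF N prefix_agree_prefix_of])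
  have pre_i: "?pre \<omega> i k = Y i k \<omega>" if "k \<le> n" for k \<omega> using i that by (simp add: prefix_of_def)
  note factor = integrable_prefix_factor[OF ra fS, where b = "\<lambda>_. Suc n"]
  show "integrable \<Omega> (\<lambda>\<omega>. \<Sum>k<N (?obs \<omega>). r (Y i k \<omega>))"
  proof (rule factor[where G = "\<lambda>v. \<Sum>k<N v. r (v i k)"], intro ballI)
    fix \<omega>
    have "r (Y i k \<omega>) = r (?pre \<omega> i k)" if "k < N (?obs \<omega>)" for k
      using pre_i N_le[of \<omega>] that by simp
    then show "(\<Sum>k<N (?obs \<omega>). r (Y i k \<omega>)) = (\<Sum>k<N (?pre \<omega>). r (?pre \<omega> i k))"
      by (simp add: N_pre)
  qed
  show "integrable \<Omega> (\<lambda>\<omega>. real (N (?obs \<omega>)))"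
    by (rule factor[where G = "\<lambda>v. real (N v)"]) (simp add: N_pre)
  show "integrable \<Omega> (\<lambda>\<omega>. H (Y i 0 \<omega>))"
    by (rule factor[where G = "\<lambda>v. H (v i 0)"]) (simp add: pre_i)
  show "integrable \<Omega> (\<lambda>\<omega>. H (Y i (N (?obs \<omega>)) \<omega>))"
    by (rule factor[where G = "\<lambda>v. H (v i (N v))"]) (simp add: pre_i N_le N_pre)
qed

lemma stopped_reward_deviation:
  fixes r H :: "'s \<Rightarrow> real" and N :: "(nat \<Rightarrow> nat \<Rightarrow> 's) \<Rightarrow> nat" and Y :: "nat \<Rightarrow> nat \<Rightarrow> 'a \<Rightarrow> 's"
  assumes ra: "rested_arms \<Omega> K S P Y" and fS: "\<forall>j\<in>{1..K}. finite (S j)" and i: "i \<in> {1..K}"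
    and st: "stochastic (S i) (P i)" and N: "stopping_count K i n N"
    and pois: "\<forall>x\<in>S i. r x - \<mu> = H x - (\<Sum>y\<in>S i. P i x y * H y)"
  defines "R \<equiv> \<lambda>\<omega>. \<Sum>k<N (\<lambda>j m. Y j m \<omega>). r (Y i k \<omega>)"
    and "T \<equiv> \<lambda>\<omega>. real (N (\<lambda>j m. Y j m \<omega>))"
  shows "integrable \<Omega> R \<and> integrable \<Omega> T \<and>
    \<bar>integral\<^sup>L \<Omega> R - \<mu> * integral\<^sup>L \<Omega> T\<bar> \<le> 2 * (\<Sum>x\<in>S i. \<bar>H x\<bar>)"
proof -
  interpret prob_space \<Omega> using ra unfolding rested_arms_def by auto
  let ?obs = "\<lambda>\<omega> j m. Y j m \<omega>"
  let ?HN = "\<lambda>\<omega>. H (Y i (N (?obs \<omega>)) \<omega>)"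
  have intR: "integrable \<Omega> R" and intT: "integrable \<Omega> T"
    and int0: "integrable \<Omega> (\<lambda>\<omega>. H (Y i 0 \<omega>))" and intHN: "integrable \<Omega> ?HN"
    unfolding R_def T_def by (rule integrable_stopped_observations[OF ra fS i N])+
  define Z where "Z k \<omega> = (if k < N (?obs \<omega>)
      then H (Y i (Suc k) \<omega>) - (\<Sum>y\<in>S i. P i (Y i k \<omega>) y * H y) else 0)" for k \<omega>
  have Z: "integrable \<Omega> (Z k) \<and> integral\<^sup>L \<Omega> (Z k) = 0" for k
    unfolding Z_def by (rule integral_martingale_difference_eq_0[OF ra fS i st N])
  have telescope: "R \<omega> - \<mu> * T \<omega> = H (Y i 0 \<omega>) - ?HN \<omega> + (\<Sum>k<n. Z k \<omega>)" if "\<omega> \<in> space \<Omega>" for \<omega>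
  proof -
    have "\<forall>k. Y i k \<omega> \<in> S i" using ra i that unfolding rested_arms_def by auto
    from poisson_telescope[OF pois this stopping_countD(1)[OF N]]
    show ?thesis unfolding R_def T_def Z_def by simp
  qed
  have "integral\<^sup>L \<Omega> R - \<mu> * integral\<^sup>L \<Omega> T = integral\<^sup>L \<Omega> (\<lambda>\<omega>. R \<omega> - \<mu> * T \<omega>)"
    using intR intT by simp
  also have "\<dots> = integral\<^sup>L \<Omega> (\<lambda>\<omega>. H (Y i 0 \<omega>) - ?HN \<omega> + (\<Sum>k<n. Z k \<omega>))"
    using telescope by (rule Bochner_Integration.integral_cong[OF refl])
  also have "\<dots> = integral\<^sup>L \<Omega> (\<lambda>\<omega>. H (Y i 0 \<omega>)) - integral\<^sup>L \<Omega> ?HN"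
    using Z int0 intHN by simp
  finally show ?thesis
    using intR intT fS i abs_integral_arm_observation_le[OF ra i _ int0]
      abs_integral_arm_observation_le[OF ra i _ intHN]
    by auto
qed

lemma ucbm_expected_reward_deviation:
  fixes Y :: "nat \<Rightarrow> nat \<Rightarrow> 'a \<Rightarrow> 's" and H :: "nat \<Rightarrow> 's \<Rightarrow> real"
  assumes vi: "valid_init K M init" and ra: "rested_arms \<Omega> K S P Y"
    and fS: "\<forall>i\<in>{1..K}. finite (S i)" and st: "\<forall>i\<in>{1..K}. stochastic (S i) (P i)"
    and pois: "\<forall>i\<in>{1..K}. \<forall>x\<in>S i. r i x - \<mu> i = H i x - (\<Sum>y\<in>S i. P i x y * H i y)"
  shows "\<bar>(\<integral>\<omega>. ucbm_total_reward K M L init r (\<lambda>i k. Y i k \<omega>) n \<partial>\<Omega>)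
      - (\<Sum>i\<in>{1..K}. \<mu> i * (\<integral>\<omega>. real (ucbm_count K M L init r (\<lambda>i k. Y i k \<omega>) n i) \<partial>\<Omega>))\<bar>
    \<le> (\<Sum>i\<in>{1..K}. 2 * (\<Sum>x\<in>S i. \<bar>H i x\<bar>))"
proof -
  let ?R = "\<lambda>i \<omega>. \<Sum>k<ucbm_count K M L init r (\<lambda>j m. Y j m \<omega>) n i. r i (Y i k \<omega>)"
  let ?T = "\<lambda>i \<omega>. real (ucbm_count K M L init r (\<lambda>j m. Y j m \<omega>) n i)"
  have arm: "integrable \<Omega> (?R i) \<and> integrable \<Omega> (?T i)
      \<and> \<bar>integral\<^sup>L \<Omega> (?R i) - \<mu> i * integral\<^sup>L \<Omega> (?T i)\<bar> \<le> 2 * (\<Sum>x\<in>S i. \<bar>H i x\<bar>)"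
    if i: "i \<in> {1..K}" for i
    using stopped_reward_deviation[OF ra fS i _ ucbm_count_stopping, where r = "r i" and H = "H i"]
      st pois i by blast
  have "(\<integral>\<omega>. ucbm_total_reward K M L init r (\<lambda>i k. Y i k \<omega>) n \<partial>\<Omega>) = (\<integral>\<omega>. (\<Sum>i\<in>{1..K}. ?R i \<omega>) \<partial>\<Omega>)"
    by (simp add: ucbm_total_reward_eq_sum_arms[OF vi])
  also have "\<dots> = (\<Sum>i\<in>{1..K}. integral\<^sup>L \<Omega> (?R i))"
    using arm by (intro Bochner_Integration.integral_sum) auto
  finally have "\<bar>(\<integral>\<omega>. ucbm_total_reward K M L init r (\<lambda>i k. Y i k \<omega>) n \<partial>\<Omega>)
      - (\<Sum>i\<in>{1..K}. \<mu> i * integral\<^sup>L \<Omega> (?T i))\<bar>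
      = \<bar>\<Sum>i\<in>{1..K}. integral\<^sup>L \<Omega> (?R i) - \<mu> i * integral\<^sup>L \<Omega> (?T i)\<bar>"
    by (simp add: sum_subtractf)
  also have "\<dots> \<le> (\<Sum>i\<in>{1..K}. 2 * (\<Sum>x\<in>S i. \<bar>H i x\<bar>))"
    using arm by (intro order_trans[OF sum_abs sum_mono]) auto
  finally show ?thesis .
qed

theorem lemma4:
  fixes K M :: nat
    and S :: "nat \<Rightarrow> 's set"
    and P :: "nat \<Rightarrow> 's \<Rightarrow> 's \<Rightarrow> real"
    and r :: "nat \<Rightarrow> 's \<Rightarrow> real"
    and \<pi> :: "nat \<Rightarrow> 's \<Rightarrow> real"
  defines "\<mu> \<equiv> (\<lambda>i. mean_reward (S i) (r i) (\<pi> i))"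
  assumes "1 \<le> M" and "M \<le> K"
    and "\<forall>i\<in>{1..K}. finite (S i) \<and> S i \<noteq> {}"
    and "\<forall>i\<in>{1..K}. stochastic (S i) (P i)"
    and "\<forall>i\<in>{1..K}. irreducible (S i) (P i)"
    and "\<forall>i\<in>{1..K}. aperiodic (S i) (P i)"
    and "\<forall>i\<in>{1..K}. stationary (S i) (P i) (\<pi> i)"
    and "\<forall>i j. 1 \<le> i \<longrightarrow> i \<le> j \<longrightarrow> j \<le> K \<longrightarrow> \<mu> j \<le> \<mu> i"
    and "M < K \<longrightarrow> \<mu> (M + 1) < \<mu> M"
  shows "\<exists>C::real. \<forall>(L::real) init (\<Omega>::'a measure) Y.
           L > 0 \<longrightarrow> valid_init K M init \<longrightarrow> rested_arms \<Omega> K S P Y \<longrightarrow>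
           (\<forall>n::nat.
              \<bar>(real n * (\<Sum>j\<in>{1..M}. \<mu> j)
                  - (\<integral>\<omega>. ucbm_total_reward K M L init r (\<lambda>i k. Y i k \<omega>) n \<partial>\<Omega>))
               - (real n * (\<Sum>j\<in>{1..M}. \<mu> j)
                  - (\<Sum>i\<in>{1..K}. \<mu> i *
                       (\<integral>\<omega>. real (ucbm_count K M L init r (\<lambda>i k. Y i k \<omega>) n i) \<partial>\<Omega>)))\<bar>
              \<le> C)"
proof -
  have fS: "\<forall>i\<in>{1..K}. finite (S i)" using assms(4) by simp
  have "\<forall>i\<in>{1..K}. \<exists>H. \<forall>x\<in>S i. r i x - \<mu> i = H x - (\<Sum>y\<in>S i. P i x y * H y)"
    unfolding \<mu>_def using poisson_equation_reward fS assms(5,6,8) by blast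
  then obtain H where H: "\<forall>i\<in>{1..K}. \<forall>x\<in>S i. r i x - \<mu> i = H i x - (\<Sum>y\<in>S i. P i x y * H i y)"
    by metis
  show ?thesis
    using ucbm_expected_reward_deviation[OF _ _ fS assms(5) H]
    by (intro exI[of _ "\<Sum>i\<in>{1..K}. 2 * (\<Sum>x\<in>S i. \<bar>H i x\<bar>)"] allI impI) (simp add: abs_minus_commute)
qed

end
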